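(* Let $X, Y, Z$ be Polish spaces and let $P: X \rightsquigarrow Y$ be a tight Feller kernel such that each $P(x,\cdot)$ has a continuous density $\rho_x$ with respect to a fixed reference Borel measure on $Y$. Let $\epsilon \in [0,1)$ and let $R \subseteq X \times Z$ and $S \subseteq Y \times Z$ be closed relations. If $P_!^\epsilon R \subseteq S$, then $R \subseteq P^{*,\epsilon} S$.
   Context: Markov kernel, Feller and tight as usual: $P(x,\cdot)$ Borel probability measures, $x \mapsto P(x,A)$ measurable; Feller means $x \mapsto \int\phi\,dP(x,\cdot)$ continuous for bounded continuous $\phi$; tight means for each compact $K \subseteq X$, $\eta>0$ there is compact $L$ with $P(x,L) \ge 1-\eta$ for $x \in K$. The $\epsilon$-highest density region is $\mathrm{supp}_\epsilon(P(x)) = \{y : \rho_x(y) \ge \lambda_\epsilon\}$ with $\lambda_\epsilon = \sup\{\lambda \ge 0 : P(x, \{y : \rho_x(y) \ge \lambda\}) \ge 1-\epsilon\}$. The $\epsilon$-pushforward is $P_!^\epsilon R = \overline{\bigcup_{(x,z) \in R} \mathrm{supp}_\epsilon(P(x)) \times \{z\}} \subseteq Y \times Z$ (closure). The $\epsilon$-pullback is $P^{*,\epsilon} S = \{(x,z) : P(x, S_z) \ge 1-\epsilon\}$ with $S_z = \{y : (y,z) \in S\}$. *)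

theory Defs
  imports "HOL-Probability.Probability"
begin

definition markov_kernel :: "('x::topological_space \<Rightarrow> 'y::topological_space measure) \<Rightarrow> bool" where
  "markov_kernel P \<longleftrightarrow>
     (\<forall>x. prob_space (P x) \<and> sets (P x) = sets borel) \<and>
     (\<forall>A \<in> sets (borel :: 'y measure). (\<lambda>x. measure (P x) A) \<in> borel_measurable borel)"

definition feller_kernel :: "('x::topological_space \<Rightarrow> 'y::topological_space measure) \<Rightarrow> bool" where
  "feller_kernel P \<longleftrightarrow>
     (\<forall>\<phi> :: 'y \<Rightarrow> real. continuous_on UNIV \<phi> \<and> bounded (range \<phi>) \<longrightarrow>
        continuous_on UNIV (\<lambda>x. \<integral>y. \<phi> y \<partial>P x))"

definition tight_kernel :: "('x::topological_space \<Rightarrow> 'y::topological_space measure) \<Rightarrow> bool" where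
  "tight_kernel P \<longleftrightarrow>
     (\<forall>K \<eta>. compact K \<and> (\<eta>::real) > 0 \<longrightarrow>
        (\<exists>L. compact L \<and> (\<forall>x\<in>K. measure (P x) L \<ge> 1 - \<eta>)))"

definition hd_level :: "('x \<Rightarrow> 'y measure) \<Rightarrow> ('x \<Rightarrow> 'y \<Rightarrow> real) \<Rightarrow> real \<Rightarrow> 'x \<Rightarrow> real" where
  "hd_level P \<rho> \<epsilon> x = Sup {l. l \<ge> 0 \<and> measure (P x) {y. \<rho> x y \<ge> l} \<ge> 1 - \<epsilon>}"

definition hd_supp :: "('x \<Rightarrow> 'y measure) \<Rightarrow> ('x \<Rightarrow> 'y \<Rightarrow> real) \<Rightarrow> real \<Rightarrow> 'x \<Rightarrow> 'y set" where
  "hd_supp P \<rho> \<epsilon> x = {y. \<rho> x y \<ge> hd_level P \<rho> \<epsilon> x}"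

definition eps_pushforward ::
  "('x \<Rightarrow> 'y::topological_space measure) \<Rightarrow> ('x \<Rightarrow> 'y \<Rightarrow> real) \<Rightarrow> real \<Rightarrow> ('x \<times> 'z::topological_space) set \<Rightarrow> ('y \<times> 'z) set" where
  "eps_pushforward P \<rho> \<epsilon> R = closure (\<Union>(x, z) \<in> R. hd_supp P \<rho> \<epsilon> x \<times> {z})"

definition eps_pullback ::
  "('x \<Rightarrow> 'y measure) \<Rightarrow> real \<Rightarrow> ('y \<times> 'z) set \<Rightarrow> ('x \<times> 'z) set" where
  "eps_pullback P \<epsilon> S = {(x, z). measure (P x) {y. (y, z) \<in> S} \<ge> 1 - \<epsilon>}"

end

theory Submission
  imports Defs
begin

text \<open>The supremum defining \<open>\<lambda>\<^sub>\<epsilon>\<close> is attained: the superlevel sets \<open>{\<rho>\<^sub>x \<ge> \<lambda>}\<close> shrink as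
  \<open>\<lambda>\<close> rises, so continuity of \<open>P(x)\<close> from above shows that the \<open>\<epsilon>\<close>-highest density region
  itself has mass at least \<open>1 - \<epsilon>\<close>. For \<open>(x, z) \<in> R\<close> this region lies in the section \<open>S\<^sub>z\<close>
  because \<open>P\<^sub>!\<^sup>\<epsilon> R \<subseteq> S\<close>.\<close>

lemma (in finite_measure) measure_INT_decseq_ge:
  assumes "range A \<subseteq> sets M" "decseq A" "\<And>n. c \<le> measure M (A n)"
  shows "c \<le> measure M (\<Inter>n. A n)"
  using finite_Lim_measure_decseq[OF assms(1,2)] by (rule LIMSEQ_le_const) (use assms(3) in auto)

lemma INT_superlevel_diff_inverse_Suc:
  fixes f :: "'a \<Rightarrow> real"
  shows "(\<Inter>n. {y. s - inverse (Suc n) \<le> f y}) = {y. s \<le> f y}"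
proof (intro set_eqI iffI)
  fix y
  assume "y \<in> {y. s \<le> f y}"
  then have "s \<le> f y"
    by simp
  have "s - inverse (Suc n) \<le> f y" for n
  proof -
    have "0 \<le> inverse (real (Suc n))"
      by simp
    with \<open>s \<le> f y\<close> show ?thesis
      by linarith
  qed
  then show "y \<in> (\<Inter>n. {y. s - inverse (Suc n) \<le> f y})"
    by blast
next
  fix y
  assume "y \<in> (\<Inter>n. {y. s - inverse (Suc n) \<le> f y})"
  moreover have "(\<lambda>n. s - inverse (Suc n)) \<longlonglongrightarrow> s - 0"
    by (intro tendsto_intros LIMSEQ_inverse_real_of_nat)
  ultimately show "y \<in> {y. s \<le> f y}"
    by (simp add: LIMSEQ_le_const2)
qed

lemma (in prob_space) prob_superlevel_antimono:
  fixes f :: "'a \<Rightarrow> real"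
  assumes "\<And>l. {y. l \<le> f y} \<in> events" "a \<le> b"
  shows "prob {y. b \<le> f y} \<le> prob {y. a \<le> f y}"
  using assms by (intro finite_measure_mono) auto

lemma (in prob_space) bdd_above_superlevel_prob:
  fixes f :: "'a \<Rightarrow> real"
  assumes meas: "\<And>l. {y. l \<le> f y} \<in> events" and "0 < c"
  shows "bdd_above {l. c \<le> prob {y. l \<le> f y}}"
proof (rule ccontr)
  assume "\<not> bdd_above {l. c \<le> prob {y. l \<le> f y}}"
  have "c \<le> prob {y. real n \<le> f y}" for n
  proof -
    obtain l where "c \<le> prob {y. l \<le> f y}" "real n < l"
      using \<open>\<not> bdd_above _\<close> by (auto simp: bdd_above_def not_le)
    then show ?thesis
      using prob_superlevel_antimono[OF meas, of "real n" l] by simp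
  qed
  then have "c \<le> prob (\<Inter>n. {y. real n \<le> f y})"
    using meas by (intro measure_INT_decseq_ge) (auto simp: decseq_def)
  moreover have "(\<Inter>n. {y. real n \<le> f y}) = {}"
  proof (rule equals0I)
    fix y
    assume y: "y \<in> (\<Inter>n. {y. real n \<le> f y})"
    obtain n where "f y < real n"
      using reals_Archimedean2 by blast
    moreover have "real n \<le> f y"
      using y by blast
    ultimately show False
      by linarith
  qed
  ultimately show False
    using \<open>0 < c\<close> by simp
qed

lemma (in prob_space) prob_superlevel_Sup_ge:
  fixes f :: "'a \<Rightarrow> real"
  assumes meas: "\<And>l. {y. l \<le> f y} \<in> events" and nonneg: "\<And>y. 0 \<le> f y"
    and "0 \<le> e" "e < 1"
  shows "1 - e \<le> prob {y. Sup {l. 0 \<le> l \<and> 1 - e \<le> prob {y. l \<le> f y}} \<le> f y}"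
proof -
  define L where "L = {l. 0 \<le> l \<and> 1 - e \<le> prob {y. l \<le> f y}}"
  have "{y. 0 \<le> f y} = UNIV"
    using nonneg by auto
  then have "{y. 0 \<le> f y} = space M"
    using meas[of 0] sets.sets_into_space by auto
  then have "0 \<in> L"
    using \<open>0 \<le> e\<close> by (simp add: L_def prob_space)
  have "bdd_above {l. 1 - e \<le> prob {y. l \<le> f y}}"
    using \<open>e < 1\<close> by (intro bdd_above_superlevel_prob meas) simp
  then have "bdd_above L"
    by (rule bdd_above_mono) (auto simp: L_def)
  define s where "s = Sup L"
  have "1 - e \<le> prob {y. s - inverse (Suc n) \<le> f y}" for n
  proof -
    have "s - inverse (Suc n) < Sup L"
      by (simp add: s_def)
    then obtain l where "l \<in> L" "s - inverse (Suc n) < l"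
      using \<open>0 \<in> L\<close> by (auto elim: less_cSupE)
    then show ?thesis
      using prob_superlevel_antimono[OF meas, of "s - inverse (Suc n)" l] by (simp add: L_def)
  qed
  moreover have "decseq (\<lambda>n. {y. s - inverse (Suc n) \<le> f y})"
  proof (rule decseq_SucI)
    fix n
    have "inverse (real (Suc (Suc n))) \<le> inverse (Suc n)"
      by (simp add: le_imp_inverse_le)
    then show "{y. s - inverse (Suc (Suc n)) \<le> f y} \<subseteq> {y. s - inverse (Suc n) \<le> f y}"
      using order_trans[OF diff_left_mono] by blast
  qed
  ultimately have "1 - e \<le> prob (\<Inter>n. {y. s - inverse (Suc n) \<le> f y})"
    using meas by (intro measure_INT_decseq_ge) auto
  moreover have "(\<Inter>n. {y. s - inverse (Suc n) \<le> f y}) = {y. s \<le> f y}"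
    by (rule INT_superlevel_diff_inverse_Suc)
  ultimately show ?thesis
    by (simp add: s_def L_def)
qed

lemma measure_hd_supp_ge:
  fixes \<rho> :: "'x \<Rightarrow> 'y::topological_space \<Rightarrow> real"
  assumes "prob_space (P x)" "sets (P x) = sets borel"
    and "\<rho> x \<in> borel_measurable borel" "\<And>y. 0 \<le> \<rho> x y"
    and "0 \<le> \<epsilon>" "\<epsilon> < 1"
  shows "1 - \<epsilon> \<le> measure (P x) (hd_supp P \<rho> \<epsilon> x)"
proof -
  have "{y. l \<le> \<rho> x y} \<in> sets (P x)" for l
    unfolding assms(2) using assms(3) by measurable
  then show ?thesis
    unfolding hd_supp_def hd_level_def
    using prob_space.prob_superlevel_Sup_ge[OF assms(1)] assms(4-6) by blast
qed

lemma hd_supp_times_subset_eps_pushforward: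
  assumes "(x, z) \<in> R"
  shows "hd_supp P \<rho> \<epsilon> x \<times> {z} \<subseteq> eps_pushforward P \<rho> \<epsilon> R"
  unfolding eps_pushforward_def using assms by (intro subset_trans[OF _ closure_subset]) auto

lemma closed_section:
  fixes S :: "('a::topological_space \<times> 'b::topological_space) set"
  assumes "closed S"
  shows "closed {y. (y, z) \<in> S}"
  using closed_vimage[OF assms continuous_on_Pair[OF continuous_on_id continuous_on_const]]
  by (simp add: vimage_def)

theorem mainTheorem16:
  fixes P :: "'x::polish_space \<Rightarrow> 'y::polish_space measure"
    and \<mu> :: "'y measure"
    and \<rho> :: "'x \<Rightarrow> 'y \<Rightarrow> real"
    and \<epsilon> :: real
    and R :: "('x \<times> 'z::polish_space) set"
    and S :: "('y \<times> 'z) set"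
  assumes "markov_kernel P" and "feller_kernel P" and "tight_kernel P"
    and "sets \<mu> = sets borel"
    and "\<And>x. continuous_on UNIV (\<rho> x)"
    and "\<And>x y. \<rho> x y \<ge> 0"
    and "\<And>x. P x = density \<mu> (\<lambda>y. ennreal (\<rho> x y))"
    and "0 \<le> \<epsilon>" and "\<epsilon> < 1"
    and "closed R" and "closed S"
    and "eps_pushforward P \<rho> \<epsilon> R \<subseteq> S"
  shows "R \<subseteq> eps_pullback P \<epsilon> S"
proof (rule subrelI)
  fix x z
  assume "(x, z) \<in> R"
  have Px: "prob_space (P x)" "sets (P x) = sets borel"
    using assms(1) unfolding markov_kernel_def by blast+
  have "hd_supp P \<rho> \<epsilon> x \<subseteq> {y. (y, z) \<in> S}"
    using hd_supp_times_subset_eps_pushforward[OF \<open>(x, z) \<in> R\<close>] assms(12) by blast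
  moreover have "{y. (y, z) \<in> S} \<in> sets (P x)"
    using closed_section[OF assms(11)] Px(2) by simp
  ultimately have "measure (P x) (hd_supp P \<rho> \<epsilon> x) \<le> measure (P x) {y. (y, z) \<in> S}"
    by (rule finite_measure.finite_measure_mono[OF prob_space.finite_measure[OF Px(1)]])
  moreover have "1 - \<epsilon> \<le> measure (P x) (hd_supp P \<rho> \<epsilon> x)"
    using Px borel_measurable_continuous_onI[OF assms(5)] assms(6,8,9)
    by (rule measure_hd_supp_ge)
  ultimately show "(x, z) \<in> eps_pullback P \<epsilon> S"
    unfolding eps_pullback_def by simp
qed

end
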